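(* For every $k\in\mathbb{N}$, the graph $\mathcal{T}_k$ has treewidth at most $k$ and contains every graph of treewidth at most $k$; that is, $\mathcal{T}_k$ is universal for the class of graphs with treewidth at most $k$.
   Context: All graphs are simple and countable; $G$ contains $H$ if $H$ is isomorphic to a subgraph of $G$. A tree-decomposition of $G$ is a family of bags $(B_x\subseteq V(G):x\in V(T))$ indexed by a tree $T$ such that every edge has both ends in some bag and, for every vertex $v$, $\{x:v\in B_x\}$ induces a nonempty subtree of $T$; its width is the maximum bag size minus one (bags bounded); treewidth is the minimum width. Let $\mathcal{T}$ be the tree whose vertices are all finite sequences $(x_1,\dots,x_n)$ with $n\ge 0$, $x_i\in\mathbb{N}$, where $(x_1,\dots,x_n)$ is adjacent to $(x_1,\dots,x_n,x_{n+1})$, rooted at the empty sequence (ancestor = prefix). Let $c:V(\mathcal{T})\to\{0,\dots,k\}$ be a colouring such that every vertex of colour $i$ has infinitely many children of each colour in $\{0,\dots,k\}\setminus\{i\}$. $\mathcal{T}_k$ is the graph on $V(\mathcal{T})$ in which $vw$ is an edge iff $v$ is a proper ancestor of $w$ and $v$ is the only vertex on the $v$–$w$ path of $\mathcal{T}$ with colour $c(v)$. *)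

theory Defs
  imports "HOL-Library.Countable_Set" "HOL-Library.Sublist"
begin

definition simple_graph :: "'a set \<Rightarrow> ('a \<Rightarrow> 'a \<Rightarrow> bool) \<Rightarrow> bool" where
  "simple_graph V E \<longleftrightarrow>
     (\<forall>x y. E x y \<longrightarrow> x \<in> V \<and> y \<in> V \<and> x \<noteq> y \<and> E y x)"

definition path_in :: "('a \<Rightarrow> 'a \<Rightarrow> bool) \<Rightarrow> 'a set \<Rightarrow> 'a list \<Rightarrow> 'a \<Rightarrow> 'a \<Rightarrow> bool" where
  "path_in E S p x y \<longleftrightarrow>
     p \<noteq> [] \<and> hd p = x \<and> last p = y \<and> distinct p \<and> set p \<subseteq> S \<and>
     (\<forall>i. Suc i < length p \<longrightarrow> E (p ! i) (p ! Suc i))"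

definition is_tree :: "'b set \<Rightarrow> ('b \<Rightarrow> 'b \<Rightarrow> bool) \<Rightarrow> bool" where
  "is_tree TV TE \<longleftrightarrow> simple_graph TV TE \<and> TV \<noteq> {} \<and>
     (\<forall>x\<in>TV. \<forall>y\<in>TV. \<exists>!p. path_in TE TV p x y)"

definition induces_connected :: "('b \<Rightarrow> 'b \<Rightarrow> bool) \<Rightarrow> 'b set \<Rightarrow> bool" where
  "induces_connected TE S \<longleftrightarrow> (\<forall>x\<in>S. \<forall>y\<in>S. \<exists>p. path_in TE S p x y)"

definition tree_decomposition ::
  "'b set \<Rightarrow> ('b \<Rightarrow> 'b \<Rightarrow> bool) \<Rightarrow> ('b \<Rightarrow> 'a set) \<Rightarrow> 'a set \<Rightarrow> ('a \<Rightarrow> 'a \<Rightarrow> bool) \<Rightarrow> bool" where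
  "tree_decomposition TV TE B V E \<longleftrightarrow>
     is_tree TV TE \<and>
     (\<forall>x\<in>TV. B x \<subseteq> V) \<and>
     (\<forall>u v. E u v \<longrightarrow> (\<exists>x\<in>TV. u \<in> B x \<and> v \<in> B x)) \<and>
     (\<forall>v\<in>V. {x\<in>TV. v \<in> B x} \<noteq> {} \<and> induces_connected TE {x\<in>TV. v \<in> B x})"

definition tw_le :: "'b itself \<Rightarrow> nat \<Rightarrow> 'a set \<Rightarrow> ('a \<Rightarrow> 'a \<Rightarrow> bool) \<Rightarrow> bool" where
  "tw_le _ k V E \<longleftrightarrow>
     (\<exists>(TV::'b set) TE B. tree_decomposition TV TE B V E \<and>
        (\<forall>x\<in>TV. finite (B x) \<and> card (B x) \<le> k + 1))"

definition contains_graph ::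
  "'v set \<Rightarrow> ('v \<Rightarrow> 'v \<Rightarrow> bool) \<Rightarrow> 'a set \<Rightarrow> ('a \<Rightarrow> 'a \<Rightarrow> bool) \<Rightarrow> bool" where
  "contains_graph VG EG VH EH \<longleftrightarrow>
     (\<exists>f. inj_on f VH \<and> f ` VH \<subseteq> VG \<and> (\<forall>x y. EH x y \<longrightarrow> EG (f x) (f y)))"

text \<open>Vertices of the tree \<T> are finite sequences of naturals (lists); the children of v
  are the lists v @ [n]; ancestor = prefix.\<close>
definition Tk_colouring :: "nat \<Rightarrow> (nat list \<Rightarrow> nat) \<Rightarrow> bool" where
  "Tk_colouring k c \<longleftrightarrow>
     (\<forall>v. c v \<le> k) \<and>
     (\<forall>v j. j \<le> k \<and> j \<noteq> c v \<longrightarrow> infinite {n. c (v @ [n]) = j})"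

text \<open>v is a proper ancestor of w and v is the only vertex on the v--w path of \<T>
  (the prefixes u of w with v \<le> u) having colour c v.\<close>
definition Tk_arc :: "(nat list \<Rightarrow> nat) \<Rightarrow> nat list \<Rightarrow> nat list \<Rightarrow> bool" where
  "Tk_arc c v w \<longleftrightarrow>
     strict_prefix v w \<and> (\<forall>u. strict_prefix v u \<and> prefix u w \<longrightarrow> c u \<noteq> c v)"

definition Tk_edge :: "(nat list \<Rightarrow> nat) \<Rightarrow> nat list \<Rightarrow> nat list \<Rightarrow> bool" where
  "Tk_edge c v w \<longleftrightarrow> Tk_arc c v w \<or> Tk_arc c w v"

end

theory Submission
  imports Defs "HOL-Library.Product_Lexorder"
begin

text \<open>In T_k the bag of x is x together with the ancestors adjacent to x. These have pairwise
  distinct colours, so a bag has at most k + 1 elements, and the nodes whose bag contains v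
  form a subtree below v; with the prefix tree as index tree this is a tree-decomposition.

  Conversely, let G have a rooted tree-decomposition of width at most k. Order the vertices of G
  by the depth of the highest node (the apex) whose bag contains them, breaking ties by an
  enumeration of the countable vertex set. If u and v share a bag and u comes first, then u lies
  in the bag at the apex of v. Hence every edge joins a vertex to one of the at most k earlier
  vertices of the apex bag of the later end, and these earlier vertices are all earlier vertices
  of the apex bag of the latest of them. Embedding G in this order, v is sent to a child of the
  image of that latest vertex with a colour different from the colours of the images of all
  its earlier vertices. By induction the image of v sees all of them in T_k.\<close>

lemma path_in_iff_successively:
  "path_in E S p x y \<longleftrightarrow>
     p \<noteq> [] \<and> hd p = x \<and> last p = y \<and> distinct p \<and> set p \<subseteq> S \<and> successively E p"
  unfolding path_in_def successively_conv_nth by blast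

lemma path_in_of_walk:
  assumes "p \<noteq> []" "successively (\<lambda>a b. a = b \<or> E a b) p" "set p \<subseteq> S"
  shows "\<exists>q. path_in E S q (hd p) (last p)"
  using assms
proof (induction "length p" arbitrary: p rule: less_induct)
  case less
  show ?case
  proof (cases "distinct p")
    case True
    with less.prems(2) have "successively E p"
      unfolding successively_conv_nth by (metis Suc_lessD distinct_conv_nth lessI n_not_Suc_n)
    then show ?thesis using True less.prems by (auto simp: path_in_iff_successively)
  next
    case False
    then obtain xs ys zs y where p: "p = xs @ [y] @ ys @ [y] @ zs"
      using not_distinct_decomp by blast
    define p' where "p' = xs @ [y] @ zs"
    have "length p' < length p" using p p'_def by simp
    moreover have "successively (\<lambda>a b. a = b \<or> E a b) p'"
      using less.prems(2) unfolding p p'_def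
      by (auto simp: successively_append_iff successively_Cons split: if_splits)
    moreover have "set p' \<subseteq> S" using less.prems(3) unfolding p p'_def by auto
    moreover have "hd p' = hd p" "last p' = last p" unfolding p p'_def by (cases xs; cases zs; simp)+
    ultimately show ?thesis using less.hyps[of p'] p'_def by auto
  qed
qed

lemma path_in_take:
  assumes "path_in E S p x y" "i < length p"
  shows "path_in E S (take (Suc i) p) x (p ! i)"
proof -
  have "last (take (Suc i) p) = p ! i" using assms(2) by (simp add: take_Suc_conv_app_nth)
  then show ?thesis
    using assms set_take_subset[of "Suc i" p] unfolding path_in_def by (auto simp: min_def)
qed

lemma path_in_append:
  assumes "path_in E S p x y" "path_in E S q y z" "set p \<inter> set (tl q) = {}"
  shows "path_in E S (p @ tl q) x z"
proof -
  obtain q' where q: "q = y # q'" using assms(2) by (cases q) (auto simp: path_in_iff_successively)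
  have "successively E (p @ q')" "distinct (p @ q')" "last (p @ q') = z"
    using assms unfolding q path_in_iff_successively
    by (auto simp: successively_append_iff successively_Cons split: if_splits)
  then show ?thesis using assms unfolding q path_in_iff_successively by auto
qed

definition child_edge :: "nat list \<Rightarrow> nat list \<Rightarrow> bool" where
  "child_edge v w \<longleftrightarrow> (\<exists>n. w = v @ [n]) \<or> (\<exists>n. v = w @ [n])"

lemma child_edge_sym: "child_edge v w \<longleftrightarrow> child_edge w v"
  unfolding child_edge_def by auto

lemma walk_down_to_descendant:
  "prefix v x \<Longrightarrow> \<exists>p. p \<noteq> [] \<and> hd p = v \<and> last p = x \<and> successively child_edge p \<and>
     set p \<subseteq> {z. prefix v z \<and> prefix z x}"
proof (induction x rule: rev_induct)
  case Nil
  then show ?case by (intro exI[of _ "[[]]"]) auto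
next
  case (snoc a x)
  show ?case
  proof (cases "v = x @ [a]")
    case True
    then show ?thesis by (intro exI[of _ "[v]"]) auto
  next
    case False
    with snoc.prems snoc.IH obtain p where p: "p \<noteq> []" "hd p = v" "last p = x"
      "successively child_edge p" "set p \<subseteq> {z. prefix v z \<and> prefix z x}" by auto
    then show ?thesis
      using snoc.prems by (intro exI[of _ "p @ [x @ [a]]"])
        (auto simp: successively_append_iff child_edge_def prefix_order.trans)
  qed
qed

lemma path_between_descendants:
  assumes "prefix v x" "prefix v y" "\<And>z. prefix v z \<Longrightarrow> prefix z x \<or> prefix z y \<Longrightarrow> z \<in> S"
  shows "\<exists>q. path_in child_edge S q x y"
proof -
  obtain px where px: "px \<noteq> []" "hd px = v" "last px = x" "successively child_edge px"
      "set px \<subseteq> {z. prefix v z \<and> prefix z x}" using walk_down_to_descendant[OF assms(1)] by blast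
  obtain py where py: "py \<noteq> []" "hd py = v" "last py = y" "successively child_edge py"
      "set py \<subseteq> {z. prefix v z \<and> prefix z y}" using walk_down_to_descendant[OF assms(2)] by blast
  define w where "w = rev px @ py"
  have "successively (\<lambda>a b. a = b \<or> child_edge a b) (rev px)"
    using px(4) by (simp add: child_edge_sym successively_mono[where P = child_edge])
  moreover have "successively (\<lambda>a b. a = b \<or> child_edge a b) py"
    using py(4) by (rule successively_mono) auto
  ultimately have "successively (\<lambda>a b. a = b \<or> child_edge a b) w"
    unfolding w_def using px py by (auto simp: successively_append_iff last_rev)
  moreover have "set w \<subseteq> S" unfolding w_def using px(5) py(5) assms(3) by auto
  moreover have "w \<noteq> []" "hd w = x" "last w = y" unfolding w_def using px py by (auto simp: hd_rev)
  ultimately show ?thesis using path_in_of_walk[of w child_edge S] by auto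
qed

lemma child_edge_prefix_iff:
  assumes "child_edge z z'" "butlast a \<noteq> z" "butlast a \<noteq> z'" "a \<noteq> []"
  shows "prefix a z \<longleftrightarrow> prefix a z'"
  using assms unfolding child_edge_def by (auto simp: butlast_snoc)

lemma walk_avoiding_parent_prefix_iff:
  assumes "successively child_edge p" "p \<noteq> []" "butlast a \<notin> set p" "a \<noteq> []"
  shows "prefix a (hd p) \<longleftrightarrow> prefix a (last p)"
  using assms
proof (induction p rule: induct_list012)
  case (3 z z' p)
  then have "prefix a z \<longleftrightarrow> prefix a z'" by (intro child_edge_prefix_iff) auto
  with 3 show ?case by auto
qed auto

lemma first_step_towards:
  assumes "child_edge x h" "successively child_edge p" "p \<noteq> []" "hd p = h" "last p = y"
    "x \<notin> set p"
  shows "h = x @ [n] \<longleftrightarrow> prefix (x @ [n]) y"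
proof -
  have "prefix (x @ [n]) h \<longleftrightarrow> prefix (x @ [n]) y"
    using walk_avoiding_parent_prefix_iff[of p "x @ [n]"] assms by auto
  moreover have "prefix (x @ [n]) h \<longleftrightarrow> h = x @ [n]"
    using assms(1) unfolding child_edge_def by (auto dest: prefix_length_le)
  ultimately show ?thesis by simp
qed

lemma child_edge_path_unique:
  "path_in child_edge UNIV p x y \<Longrightarrow> path_in child_edge UNIV q x y \<Longrightarrow> p = q"
proof (induction p arbitrary: x q)
  case Nil
  then show ?case by (simp add: path_in_iff_successively)
next
  case (Cons x' p)
  then obtain q' where q: "q = x # q'" and x': "x' = x"
    by (cases q) (auto simp: path_in_iff_successively)
  show ?case
  proof (cases "p = [] \<or> q' = []")
    case True
    with Cons.prems show ?thesis unfolding q x' path_in_iff_successively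
      by (metis distinct.simps(2) last.simps last_in_set)
  next
    case False
    then have p: "path_in child_edge UNIV p (hd p) y" "child_edge x (hd p)" "x \<notin> set p"
      and q': "path_in child_edge UNIV q' (hd q') y" "child_edge x (hd q')" "x \<notin> set q'"
      using Cons.prems unfolding q x' path_in_iff_successively
      by (auto simp: successively_Cons neq_Nil_conv)
    have "hd p = x @ [n] \<longleftrightarrow> hd q' = x @ [n]" for n
      using first_step_towards[of x "hd p" p y n] first_step_towards[of x "hd q'" q' y n] p q'
      by (auto simp: path_in_iff_successively)
    then have "hd p = hd q'"
      using p(2) q'(2) unfolding child_edge_def by (metis butlast_snoc)
    then show ?thesis using Cons.IH[OF p(1)] q' q x' by simp
  qed
qed

lemma is_tree_child_edge: "is_tree (UNIV :: nat list set) child_edge"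
proof -
  have "simple_graph UNIV child_edge" unfolding simple_graph_def child_edge_def by auto
  moreover have "\<exists>p. path_in child_edge UNIV p x y" for x y
    using path_between_descendants[of "[]" x y UNIV] by auto
  ultimately show ?thesis unfolding is_tree_def using child_edge_path_unique by blast
qed

definition colour_bag :: "(nat list \<Rightarrow> nat) \<Rightarrow> nat list \<Rightarrow> nat list set" where
  "colour_bag c x = {u. prefix u x \<and> (\<forall>w. strict_prefix u w \<and> prefix w x \<longrightarrow> c w \<noteq> c u)}"

lemma self_in_colour_bag: "x \<in> colour_bag c x"
  unfolding colour_bag_def by (auto dest: prefix_order.antisym simp: prefix_order.less_le_not_le)

lemma finite_colour_bag: "finite (colour_bag c x)"
  by (rule finite_subset[of _ "set (prefixes x)"]) (auto simp: colour_bag_def)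

lemma inj_on_colour_bag: "inj_on c (colour_bag c x)"
proof (rule inj_onI)
  fix u1 u2 assume u: "u1 \<in> colour_bag c x" "u2 \<in> colour_bag c x" "c u1 = c u2"
  then have "prefix u1 u2 \<or> prefix u2 u1"
    using prefix_same_cases by (auto simp: colour_bag_def)
  with u show "u1 = u2"
    unfolding colour_bag_def by (metis (mono_tags, lifting) mem_Collect_eq prefix_order.le_less)
qed

lemma card_colour_bag_le:
  assumes "\<And>v. c v \<le> k"
  shows "card (colour_bag c x) \<le> k + 1"
proof -
  have "card (colour_bag c x) = card (c ` colour_bag c x)"
    using inj_on_colour_bag by (metis card_image)
  also have "\<dots> \<le> card {0..k}" by (rule card_mono) (use assms in auto)
  finally show ?thesis by simp
qed

lemma tree_decomposition_colour_bag:
  "tree_decomposition UNIV child_edge (colour_bag c) UNIV (Tk_edge c)"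
  unfolding tree_decomposition_def
proof (intro conjI allI impI ballI)
  fix u v assume "Tk_edge c u v"
  then have "u \<in> colour_bag c v \<or> v \<in> colour_bag c u"
    unfolding Tk_edge_def Tk_arc_def colour_bag_def by auto
  then show "\<exists>x\<in>UNIV. u \<in> colour_bag c x \<and> v \<in> colour_bag c x"
    using self_in_colour_bag by blast
next
  fix v :: "nat list"
  have "v \<in> colour_bag c z" if "prefix v z" "prefix z x" "v \<in> colour_bag c x"
    for z x
    using that unfolding colour_bag_def by (auto intro: prefix_order.trans)
  then show "induces_connected child_edge {x \<in> UNIV. v \<in> colour_bag c x}"
    unfolding induces_connected_def
    by (intro ballI path_between_descendants[of v]) (auto simp: colour_bag_def)
qed (use is_tree_child_edge self_in_colour_bag in auto)

lemma tw_le_Tk_edge: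
  assumes "Tk_colouring k c"
  shows "tw_le TYPE(nat list) k UNIV (Tk_edge c)"
  using tree_decomposition_colour_bag finite_colour_bag card_colour_bag_le[of c k] assms
  unfolding tw_le_def Tk_colouring_def by blast

locale rooted_tree_decomposition =
  fixes TV :: "'b set" and TE :: "'b \<Rightarrow> 'b \<Rightarrow> bool" and B :: "'b \<Rightarrow> 'a set"
    and V :: "'a set" and E :: "'a \<Rightarrow> 'a \<Rightarrow> bool"
  assumes tree_decomposition: "tree_decomposition TV TE B V E"
begin

definition root :: 'b where "root = (SOME x. x \<in> TV)"
definition root_path :: "'b \<Rightarrow> 'b list" where "root_path x = (THE p. path_in TE TV p root x)"
definition depth :: "'b \<Rightarrow> nat" where "depth x = length (root_path x) - 1"
definition subtree :: "'a \<Rightarrow> 'b set" where "subtree v = {x \<in> TV. v \<in> B x}"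
definition height :: "'a \<Rightarrow> nat" where "height v = (LEAST n. \<exists>x\<in>subtree v. depth x = n)"
definition apex :: "'a \<Rightarrow> 'b" where "apex v = (SOME x. x \<in> subtree v \<and> depth x = height v)"

lemma root_in: "root \<in> TV"
  using tree_decomposition unfolding tree_decomposition_def is_tree_def root_def
  by (auto intro: someI)

lemma ex1_root_path: "x \<in> TV \<Longrightarrow> \<exists>!p. path_in TE TV p root x"
  using tree_decomposition root_in unfolding tree_decomposition_def is_tree_def by blast

lemma path_in_root_path: "x \<in> TV \<Longrightarrow> path_in TE TV (root_path x) root x"
  unfolding root_path_def by (rule theI'[OF ex1_root_path])

lemma root_path_unique: "x \<in> TV \<Longrightarrow> path_in TE TV p root x \<Longrightarrow> p = root_path x"
  unfolding root_path_def by (rule the1_equality[OF ex1_root_path, symmetric])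

lemma length_root_path: "x \<in> TV \<Longrightarrow> length (root_path x) = Suc (depth x)"
  using path_in_root_path[of x] unfolding depth_def path_in_def by (cases "root_path x") auto

lemma root_path_nth_depth: "x \<in> TV \<Longrightarrow> root_path x ! depth x = x"
  using path_in_root_path[of x] length_root_path[of x] unfolding path_in_def
  by (metis diff_Suc_1 last_conv_nth)

lemma depth_root_path_nth:
  assumes "x \<in> TV" "i < length (root_path x)"
  shows "depth (root_path x ! i) = i"
proof -
  have "root_path x ! i \<in> TV"
    using path_in_root_path[OF assms(1)] assms(2) unfolding path_in_def by (auto dest: nth_mem)
  moreover have "path_in TE TV (take (Suc i) (root_path x)) root (root_path x ! i)"
    using path_in_take[OF path_in_root_path[OF assms(1)] assms(2)] .
  ultimately show ?thesis
    using root_path_unique length_root_path assms(2) by fastforce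
qed

lemma subtree_nonempty: "v \<in> V \<Longrightarrow> subtree v \<noteq> {}"
  using tree_decomposition unfolding tree_decomposition_def subtree_def by auto

lemma apex:
  assumes "v \<in> V"
  shows "apex v \<in> subtree v" "depth (apex v) = height v" "\<And>y. y \<in> subtree v \<Longrightarrow> height v \<le> depth y"
proof -
  have "\<exists>x\<in>subtree v. depth x = height v"
    unfolding height_def by (rule LeastI_ex) (use subtree_nonempty[OF assms] in blast)
  then show "apex v \<in> subtree v" "depth (apex v) = height v"
    unfolding apex_def by (metis (mono_tags, lifting) someI_ex)+
  show "\<And>y. y \<in> subtree v \<Longrightarrow> height v \<le> depth y" unfolding height_def by (blast intro: Least_le)
qed

lemma apex_in: "v \<in> V \<Longrightarrow> apex v \<in> TV"
  using apex(1) unfolding subtree_def by blast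

lemma root_path_through_shallowest:
  assumes S: "S \<subseteq> TV" "induces_connected TE S" and y: "y \<in> S" "\<forall>z\<in>S. depth y \<le> depth z"
    and x: "x \<in> S"
  shows "\<exists>q. path_in TE S q y x \<and> root_path x = root_path y @ tl q"
proof -
  obtain q where q: "path_in TE S q y x" using S(2) y x unfolding induces_connected_def by blast
  have TV: "y \<in> TV" "x \<in> TV" using S y x by auto
  have "set (root_path y) \<inter> set (tl q) = {}"
  proof (rule ccontr)
    assume "set (root_path y) \<inter> set (tl q) \<noteq> {}"
    then obtain i where i: "i < length (root_path y)" "root_path y ! i \<in> set (tl q)"
      by (metis disjoint_iff in_set_conv_nth)
    have "root_path y ! i \<in> S" "y \<notin> set (tl q)"
      using i(2) q unfolding path_in_def by (cases q; auto)+
    moreover have "depth (root_path y ! i) = i" using depth_root_path_nth[OF TV(1) i(1)] .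
    ultimately show False
      using y(2) i root_path_nth_depth[OF TV(1)] length_root_path[OF TV(1)]
      by (metis le_antisym less_Suc_eq_le)
  qed
  moreover have "path_in TE TV q y x" using q S(1) unfolding path_in_def by auto
  ultimately have "path_in TE TV (root_path y @ tl q) root x"
    by (intro path_in_append[OF path_in_root_path[OF TV(1)]])
  then have "root_path x = root_path y @ tl q" by (rule root_path_unique[OF TV(2), symmetric])
  with q show ?thesis by blast
qed

text \<open>Both subtrees contain x, so the root path of x passes first through apex u and then
  through apex v, and the part after apex u lies in the subtree of u.\<close>
lemma mem_bag_apex:
  assumes u: "u \<in> V" and v: "v \<in> V" and x: "x \<in> TV" "u \<in> B x" "v \<in> B x"
    and "height u \<le> height v"
  shows "u \<in> B (apex v)"
proof -
  have conn: "induces_connected TE (subtree w)" "subtree w \<subseteq> TV" if "w \<in> V" for w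
    using tree_decomposition that unfolding tree_decomposition_def subtree_def by auto
  obtain qu where qu: "path_in TE (subtree u) qu (apex u) x" "root_path x = root_path (apex u) @ tl qu"
    using root_path_through_shallowest[OF conn(2,1)[OF u] apex(1)[OF u]] apex[OF u] x
    unfolding subtree_def by auto
  obtain qv where qv: "root_path x = root_path (apex v) @ tl qv"
    using root_path_through_shallowest[OF conn(2,1)[OF v] apex(1)[OF v]] apex[OF v] x
    unfolding subtree_def by auto
  have lu: "length (root_path (apex u)) = Suc (height u)"
    and lv: "length (root_path (apex v)) = Suc (height v)"
    using length_root_path apex_in apex(2) u v by auto
  have drop_qu: "drop (height u) (root_path x) = qu"
  proof -
    have "drop (height u) (root_path (apex u)) = [apex u]"
      using lu path_in_root_path[OF apex_in[OF u]] unfolding path_in_def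
      by (metis append_eq_conv_conj last_snoc length_Suc_conv_rev)
    then show ?thesis using qu lu unfolding path_in_def by (cases qu) auto
  qed
  have "height v < length (root_path x)" using qv lv by simp
  then have "root_path x ! height v = qu ! (height v - height u)"
    and "height v - height u < length qu"
    using assms(6) unfolding drop_qu[symmetric] by auto
  moreover have "root_path x ! height v = apex v"
    using qv lv root_path_nth_depth[OF apex_in[OF v]] apex(2)[OF v] by (simp add: nth_append)
  ultimately have "apex v \<in> set qu" by (metis nth_mem)
  then show ?thesis using qu(1) unfolding path_in_def subtree_def by auto
qed

end

locale Tk_embedding = rooted_tree_decomposition TV TE B V E
  for TV :: "'b set" and TE and B :: "'b \<Rightarrow> 'a set" and V E +
  fixes k :: nat and c :: "nat list \<Rightarrow> nat"
  assumes bags_small: "\<forall>x\<in>TV. finite (B x) \<and> card (B x) \<le> k + 1"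
    and countable_V: "countable V"
    and colouring: "Tk_colouring k c"
begin

definition rank :: "'a \<Rightarrow> nat \<times> nat" where "rank v = (height v, to_nat_on V v)"
definition earlier :: "'a \<Rightarrow> 'a set" where "earlier v = {u \<in> B (apex v). rank u < rank v}"
definition latest :: "'a \<Rightarrow> 'a" where
  "latest v = inv_into (earlier v) rank (Max (rank ` earlier v))"
definition free_colour :: "('a \<Rightarrow> nat list) \<Rightarrow> 'a \<Rightarrow> nat" where
  "free_colour g v = (LEAST j. j \<notin> c ` g ` earlier v)"

text \<open>v goes to a child of the image of latest v whose colour avoids the colours of the images
  of earlier v; among the infinitely many such children it takes the one with index
  to_nat_on V v, which makes the map injective.\<close>
definition place_step :: "('a \<Rightarrow> nat list) \<Rightarrow> 'a \<Rightarrow> nat list" where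
  "place_step g v =
     (if earlier v = {} then [to_nat_on V v]
      else g (latest v) @ [enumerate {n. c (g (latest v) @ [n]) = free_colour g v} (to_nat_on V v)])"

definition place :: "'a \<Rightarrow> nat list" where
  "place = wfrec {(u, v). rank u < rank v} place_step"

lemma inj_on_rank: "inj_on rank V"
  using inj_on_to_nat_on[OF countable_V] unfolding rank_def inj_on_def by auto

lemma wf_rank: "wf {(u, v). rank u < rank v}"
  using wf_inv_image[OF wf, of rank] unfolding inv_image_def by simp

lemma earlier_subset: "v \<in> V \<Longrightarrow> earlier v \<subseteq> V"
  using tree_decomposition apex_in unfolding tree_decomposition_def earlier_def by blast

lemma finite_earlier: "v \<in> V \<Longrightarrow> finite (earlier v)"
  unfolding earlier_def using bags_small apex_in by auto

lemma card_earlier_le: 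
  assumes "v \<in> V"
  shows "card (earlier v) \<le> k"
proof -
  have bag: "finite (B (apex v))" "card (B (apex v)) \<le> k + 1" "v \<in> B (apex v)"
    using bags_small apex_in[OF assms] apex(1)[OF assms] unfolding subtree_def by auto
  have "earlier v \<subseteq> B (apex v) - {v}" unfolding earlier_def by auto
  then have "card (earlier v) \<le> card (B (apex v) - {v})" using bag by (intro card_mono) auto
  with bag show ?thesis by simp
qed

lemma latest:
  assumes "v \<in> V" "earlier v \<noteq> {}"
  shows "latest v \<in> earlier v" "\<And>a. a \<in> earlier v \<Longrightarrow> a = latest v \<or> rank a < rank (latest v)"
proof -
  have max: "Max (rank ` earlier v) \<in> rank ` earlier v"
    using finite_earlier[OF assms(1)] assms(2) by simp
  then show in_earlier: "latest v \<in> earlier v" unfolding latest_def by (rule inv_into_into)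
  fix a assume a: "a \<in> earlier v"
  have "rank a \<le> rank (latest v)"
    using a finite_earlier[OF assms(1)] f_inv_into_f[OF max] unfolding latest_def by simp
  then show "a = latest v \<or> rank a < rank (latest v)"
    using inj_on_rank earlier_subset[OF assms(1)] a in_earlier
    by (metis inj_on_contraD order_le_imp_less_or_eq subsetD)
qed

lemma earlier_latest:
  assumes v: "v \<in> V" and a: "a \<in> earlier v" "a \<noteq> latest v"
  shows "a \<in> earlier (latest v)"
proof -
  have b: "latest v \<in> earlier v" and ab: "rank a < rank (latest v)"
    using latest[OF v] a by auto
  then have "a \<in> V" "latest v \<in> V" "a \<in> B (apex v)" "latest v \<in> B (apex v)"
    using earlier_subset[OF v] a unfolding earlier_def by auto
  moreover have "height a \<le> height (latest v)"
    using ab unfolding rank_def by (auto simp: less_prod_def)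
  ultimately have "a \<in> B (apex (latest v))" using mem_bag_apex apex_in[OF v] by blast
  with ab show ?thesis unfolding earlier_def by simp
qed

lemma place_eq:
  assumes "v \<in> V"
  shows "place v = place_step place v"
proof -
  let ?R = "{(u, v). rank u < rank v}"
  have "place v = place_step (cut place ?R v) v"
    unfolding place_def by (rule wfrec[OF wf_rank])
  moreover have "free_colour (cut place ?R v) v = free_colour place v"
    unfolding free_colour_def cut_def earlier_def by (auto simp: image_def)
  moreover have "earlier v \<noteq> {} \<Longrightarrow> cut place ?R v (latest v) = place (latest v)"
    using latest(1)[OF assms] unfolding cut_def earlier_def by auto
  ultimately show ?thesis unfolding place_step_def by (auto split: if_splits)
qed

lemma free_colour:
  assumes "v \<in> V"
  shows "free_colour place v \<le> k" "free_colour place v \<notin> c ` place ` earlier v"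
proof -
  have "card (c ` place ` earlier v) \<le> k"
    using card_image_le card_earlier_le[OF assms] finite_earlier[OF assms]
    by (metis finite_imageI le_trans)
  then have "\<not> {0..k} \<subseteq> c ` place ` earlier v"
    using card_mono[OF finite_imageI[OF finite_imageI[OF finite_earlier[OF assms]]]] by fastforce
  then obtain j where j: "j \<le> k" "j \<notin> c ` place ` earlier v" by (auto simp: subset_iff)
  show "free_colour place v \<notin> c ` place ` earlier v"
    unfolding free_colour_def by (rule LeastI[of _ j]) (rule j(2))
  have "free_colour place v \<le> j" unfolding free_colour_def by (rule Least_le) (rule j(2))
  with j show "free_colour place v \<le> k" by simp
qed

definition child_indices :: "'a \<Rightarrow> nat set" where
  "child_indices v = {n. c (place (latest v) @ [n]) = free_colour place v}"

lemma place_latest: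
  assumes v: "v \<in> V" and "earlier v \<noteq> {}"
  shows "place v = place (latest v) @ [enumerate (child_indices v) (to_nat_on V v)]"
    and "infinite (child_indices v)"
    and "c (place v) = free_colour place v"
proof -
  show e: "place v = place (latest v) @ [enumerate (child_indices v) (to_nat_on V v)]"
    using place_eq[OF v] assms(2) unfolding place_step_def child_indices_def by simp
  have "free_colour place v \<noteq> c (place (latest v))"
    using free_colour(2)[OF v] latest(1)[OF assms] by blast
  then show inf: "infinite (child_indices v)"
    using colouring free_colour(1)[OF v] unfolding Tk_colouring_def child_indices_def by auto
  show "c (place v) = free_colour place v"
    using enumerate_in_set[OF inf] e unfolding child_indices_def by simp
qed

lemma length_place:
  assumes "v \<in> V"
  shows "length (place v) = 1 \<longleftrightarrow> earlier v = {}"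
proof (cases "earlier v = {}")
  case False
  then have "place (latest v) \<noteq> []"
    using place_eq latest(1)[OF assms] earlier_subset[OF assms]
    unfolding place_step_def by (auto split: if_splits)
  with False show ?thesis using place_latest(1)[OF assms False] by simp
qed (use place_eq[OF assms] in \<open>simp add: place_step_def\<close>)

lemma Tk_arc_place:
  "v \<in> V \<Longrightarrow> a \<in> earlier v \<Longrightarrow> Tk_arc c (place a) (place v)"
proof (induction v arbitrary: a rule: wf_induct_rule[OF wf_rank])
  case (1 v)
  then have ne: "earlier v \<noteq> {}" by auto
  define b where "b = latest v"
  have b: "b \<in> earlier v" "b \<in> V" using latest(1)[OF \<open>v \<in> V\<close> ne] earlier_subset 1 b_def by auto
  have colour: "c (place v) \<noteq> c (place a)"
    using place_latest(3)[OF \<open>v \<in> V\<close> ne] free_colour(2)[OF \<open>v \<in> V\<close>] 1(3) by auto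
  obtain n where snoc: "place v = place b @ [n]" using place_latest(1)[OF \<open>v \<in> V\<close> ne] b_def by simp
  show ?case
  proof (cases "a = b")
    case True
    with snoc colour show ?thesis unfolding Tk_arc_def
      by (metis prefix_order.less_le_not_le prefix_snoc prefix_snocD)
  next
    case False
    then have "a \<in> earlier b" using earlier_latest[OF \<open>v \<in> V\<close> 1(3)] b_def by simp
    moreover have "rank b < rank v" using b unfolding earlier_def by simp
    ultimately have IH: "Tk_arc c (place a) (place b)" using 1(1) b(2) by blast
    then have "strict_prefix (place a) (place v)"
      using snoc prefix_order.less_le_trans unfolding Tk_arc_def by fastforce
    moreover have "c u \<noteq> c (place a)" if "strict_prefix (place a) u" "prefix u (place v)" for u
      using that snoc colour IH unfolding Tk_arc_def by auto
    ultimately show ?thesis unfolding Tk_arc_def by blast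
  qed
qed

lemma inj_on_place: "inj_on place V"
proof (rule inj_onI)
  fix v w assume v: "v \<in> V" and w: "w \<in> V" and eq: "place v = place w"
  then have "earlier v = {} \<longleftrightarrow> earlier w = {}" using length_place by metis
  then consider "earlier v = {}" "earlier w = {}" | "earlier v \<noteq> {}" "earlier w \<noteq> {}" by blast
  then have "to_nat_on V v = to_nat_on V w"
  proof cases
    case 1
    then show ?thesis using eq place_eq v w unfolding place_step_def by simp
  next
    case 2
    have "child_indices v = child_indices w"
      using place_latest[OF v 2(1)] place_latest[OF w 2(2)] eq unfolding child_indices_def by simp
    then show ?thesis
      using place_latest[OF v 2(1)] place_latest[OF w 2(2)] eq strict_mono_enumerate
      by (metis last_snoc strict_mono_eq)
  qed
  then show "v = w" using inj_on_to_nat_on[OF countable_V] v w by (simp add: inj_on_eq_iff)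
qed

lemma contains_graph_place:
  assumes "simple_graph V E"
  shows "contains_graph UNIV (Tk_edge c) V E"
  unfolding contains_graph_def
proof (intro exI conjI allI impI)
  fix x y assume "E x y"
  then have xy: "x \<in> V" "y \<in> V" "x \<noteq> y" using assms unfolding simple_graph_def by auto
  obtain t where t: "t \<in> TV" "x \<in> B t" "y \<in> B t"
    using tree_decomposition \<open>E x y\<close> unfolding tree_decomposition_def by blast
  have "rank x < rank y \<or> rank y < rank x"
    using inj_on_rank xy by (metis inj_on_contraD neqE)
  then have "x \<in> earlier y \<or> y \<in> earlier x"
    using mem_bag_apex[OF xy(1,2) t] mem_bag_apex[OF xy(2,1) t(1,3,2)]
    unfolding earlier_def rank_def by (auto simp: less_prod_def)
  then show "Tk_edge c (place x) (place y)"
    using Tk_arc_place xy unfolding Tk_edge_def by blast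
qed (use inj_on_place in auto)

end

theorem mainTheorem11:
  fixes k :: nat and c :: "nat list \<Rightarrow> nat"
  assumes "Tk_colouring k c"
  shows "tw_le TYPE(nat list) k UNIV (Tk_edge c) \<and>
         (\<forall>(V :: 'a set) E. countable V \<and> simple_graph V E \<and> tw_le TYPE('b) k V E
              \<longrightarrow> contains_graph UNIV (Tk_edge c) V E)"
proof (intro conjI allI impI)
  show "tw_le TYPE(nat list) k UNIV (Tk_edge c)" using assms by (rule tw_le_Tk_edge)
next
  fix V :: "'a set" and E
  assume G: "countable V \<and> simple_graph V E \<and> tw_le TYPE('b) k V E"
  then obtain TV :: "'b set" and TE B where "tree_decomposition TV TE B V E"
    "\<forall>x\<in>TV. finite (B x) \<and> card (B x) \<le> k + 1"
    unfolding tw_le_def by blast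
  then interpret Tk_embedding TV TE B V E k c
    using G assms by unfold_locales auto
  show "contains_graph UNIV (Tk_edge c) V E" using G by (intro contains_graph_place) simp
qed

end
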